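(* With the notation of the context, let $r\ge1$, let $T^{(r)}$ be any unitary on $\mathcal H$ with $T^{(r)}(|j\rangle\otimes|0\rangle^{\otimes(2r+1)})=|\Psi^{(r)}_j\rangle$ for all $j\in[N]$ (here $|j\rangle,|0\rangle\in\mathbb C^{2N}$), let $\epsilon\ge0$ and let $\tilde T$ be a unitary with $\|\tilde T-T^{(r)}\|\le\epsilon/2$. Let $\Pi:\mathbb C^N\to\mathcal H$ be the isometry $\Pi|j\rangle=|j\rangle\otimes|0\rangle^{\otimes(2r+1)}$. Then $\big\|\Pi^\dagger\tilde T^\dagger S^{(r)}\tilde T\,\Pi-(H/d)^r\big\|\le\epsilon$; that is, $\tilde T^\dagger S^{(r)}\tilde T$ is a $(1,2rn+2r+n+2,\epsilon)$-block-encoding of $(H/d)^r$ (with $\epsilon=0$ for $\tilde T=T^{(r)}$).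
   Context: Let $N=2^n$, $[m]=\{0,\dots,m-1\}$, and $H$ an $N\times N$ Hermitian matrix with $\|H\|_{\max}=\max_{j,k}|H_{jk}|\le1$. For each $j\in[N]$ let $N(j)\subseteq[N]$ with $|N(j)|=d$, $\{k:H_{jk}\ne0\}\subseteq N(j)$, and $k\in N(j)\iff j\in N(k)$. A path of length $r$ from $j_0$ is $\mathbf j=(j_0,\dots,j_r)\in[N]^{r+1}$ with $j_{s+1}\in N(j_s)$ for all $s\in[r]$. Fix complex numbers $\sigma_{jk}$ with $|\sigma_{jk}|^2=|H_{jk}|$ and $\sigma_{jk}\overline{\sigma_{kj}}=\overline{H_{jk}}$ for all $j,k\in[N]$. $\mathcal H=(\mathbb C^{2N})^{\otimes(2r+2)}$ with basis $|a_0,\dots,a_{2r+1}\rangle$, $a_i\in[2N]$, and $$|\Psi^{(r)}_{j_0}\rangle=\frac1{\sqrt{d^r}}\sum_{\mathbf j}|j_0,\dots,j_r\rangle\otimes|j_0\rangle\bigotimes_{s\in[r]}\Big(\sigma_{j_sj_{s+1}}|j_{s+1}\rangle+\sqrt{1-|H_{j_sj_{s+1}}|}\,|j_{s+1}+N\rangle\Big)$$ (sum over paths of length $r$ from $j_0$); this is a unit vector. $S^{(r)}|a_0,\dots,a_{2r+1}\rangle=|a_{2r+1},\dots,a_0\rangle$. Block-encoding: $U$ is an $(\alpha,a,\epsilon)$-block-encoding of $A$ if $\|A-\alpha(\text{compression of }U\text{ to ancillas in }|0\rangle)\|\le\epsilon$ in spectral norm. Norms are spectral norms. *)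

theory Defs
  imports "Jordan_Normal_Form.Schur_Decomposition"
begin

definition vec_norm2 :: "complex vec \<Rightarrow> real" where
  "vec_norm2 v = sqrt (\<Sum>i<dim_vec v. (cmod (v $ i))\<^sup>2)"

definition spec_norm :: "complex mat \<Rightarrow> real" where
  "spec_norm A = Sup {vec_norm2 (A *\<^sub>v v) | v. v \<in> carrier_vec (dim_col A) \<and> vec_norm2 v \<le> 1}"

definition hermitian_mat :: "complex mat \<Rightarrow> bool" where
  "hermitian_mat A \<longleftrightarrow> square_mat A \<and> mat_adjoint A = A"

definition unitary_mat :: "complex mat \<Rightarrow> bool" where
  "unitary_mat U \<longleftrightarrow> square_mat U \<and> mat_adjoint U * U = 1\<^sub>m (dim_row U)
                      \<and> U * mat_adjoint U = 1\<^sub>m (dim_row U)"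

text \<open>Basis states of m registers of dimension b are encoded big-endian:
  the index k corresponds to the digit list digits b m k = [a_0, ..., a_{m-1}],
  with a_0 the most significant digit.\<close>
fun digits :: "nat \<Rightarrow> nat \<Rightarrow> nat \<Rightarrow> nat list" where
  "digits b 0 k = []"
| "digits b (Suc m) k = (k div b ^ m) mod b # digits b m k"

definition tensor_list :: "nat \<Rightarrow> complex vec list \<Rightarrow> complex vec" where
  "tensor_list b vs = vec (b ^ length vs)
     (\<lambda>k. prod_list (map2 (\<lambda>v a. v $ a) vs (digits b (length vs) k)))"

definition paths :: "nat \<Rightarrow> (nat \<Rightarrow> nat set) \<Rightarrow> nat \<Rightarrow> nat \<Rightarrow> nat list set" where
  "paths N Nb r j0 = {p. length p = Suc r \<and> p ! 0 = j0 \<and> (\<forall>i\<in>set p. i < N)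
                        \<and> (\<forall>s<r. p ! Suc s \<in> Nb (p ! s))}"

definition Psi :: "nat \<Rightarrow> complex mat \<Rightarrow> (nat \<Rightarrow> nat set) \<Rightarrow> nat \<Rightarrow> (nat \<Rightarrow> nat \<Rightarrow> complex)
                   \<Rightarrow> nat \<Rightarrow> nat \<Rightarrow> complex vec" where
  "Psi N H Nb d \<sigma> r j0 =
     (let b = 2 * N;
          term = (\<lambda>p. tensor_list b
             (map (\<lambda>i. unit_vec b i) p @ [unit_vec b j0] @
              map (\<lambda>s. \<sigma> (p ! s) (p ! Suc s) \<cdot>\<^sub>v unit_vec b (p ! Suc s)
                       + complex_of_real (sqrt (1 - cmod (H $$ (p ! s, p ! Suc s))))
                         \<cdot>\<^sub>v unit_vec b (p ! Suc s + N)) [0..<r]))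
      in vec (b ^ (2 * r + 2))
           (\<lambda>k. complex_of_real (1 / sqrt (real d ^ r)) * (\<Sum>p\<in>paths N Nb r j0. term p $ k)))"

definition Swap :: "nat \<Rightarrow> nat \<Rightarrow> complex mat" where
  "Swap N r = (let b = 2 * N; m = 2 * r + 2 in
     mat (b ^ m) (b ^ m) (\<lambda>(i, k). if digits b m i = rev (digits b m k) then 1 else 0))"

definition padded :: "nat \<Rightarrow> nat \<Rightarrow> nat \<Rightarrow> complex vec" where
  "padded N r j = tensor_list (2 * N) (unit_vec (2 * N) j # replicate (2 * r + 1) (unit_vec (2 * N) 0))"

definition Pi_iso :: "nat \<Rightarrow> nat \<Rightarrow> complex mat" where
  "Pi_iso N r = mat_of_cols ((2 * N) ^ (2 * r + 2)) (map (padded N r) [0..<N])"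

end

theory Submission
  imports Defs "HOL-Analysis.L2_Norm"
begin

text \<open>
  The (j, k) entry of Pi* T* S T Pi is the overlap of \<Psi>_j with S \<Psi>_k. Each \<Psi>_j is a
  normalised sum over the paths p from j of product states, and S pairs register i with register
  2r + 1 - i. So the vertex registers of a path p from j meet the edge registers of a path q from
  k and vice versa, and the product of these overlaps vanishes unless q is p reversed, i.e. unless
  p ends at k. In that case it is the product over the steps (a, b) of p of
  \<sigma>(b, a) cnj(\<sigma>(a, b)) = H(a, b), and summing over all paths gives d^(-r) (H^r)(j, k).

  For the perturbed unitary, with D = T' - T the difference of the two sandwiches is
  (Pi* T'* S) (D Pi) + (Pi* D* S) (T Pi); all other factors are contractions, so its
  spectral norm is at most 2 \<parallel>D\<parallel> \<le> \<epsilon>.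
\<close>

section \<open>Inner product and norm of complex vectors\<close>

definition vec_inner :: "complex vec \<Rightarrow> complex vec \<Rightarrow> complex" where
  "vec_inner x y = (\<Sum>i<dim_vec x. cnj (x $ i) * y $ i)"

lemma vec_norm2_L2_set: "vec_norm2 v = L2_set (\<lambda>i. cmod (v $ i)) {..<dim_vec v}"
  unfolding vec_norm2_def L2_set_def by simp

lemma vec_norm2_nonneg: "vec_norm2 v \<ge> 0"
  unfolding vec_norm2_def by (simp add: sum_nonneg)

lemma vec_norm2_zero_vec [simp]: "vec_norm2 (0\<^sub>v n) = 0"
  by (simp add: vec_norm2_def)

lemma vec_inner_self: "vec_inner x x = complex_of_real ((vec_norm2 x)\<^sup>2)"
proof -
  have "vec_inner x x = (\<Sum>i<dim_vec x. complex_of_real ((cmod (x $ i))\<^sup>2))"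
    unfolding vec_inner_def by (intro sum.cong refl) (metis complex_norm_square mult.commute of_real_power)
  then show ?thesis unfolding vec_norm2_def by (simp add: sum_nonneg)
qed

lemma vec_inner_Cauchy_Schwarz:
  assumes "dim_vec y = dim_vec x"
  shows "cmod (vec_inner x y) \<le> vec_norm2 x * vec_norm2 y"
proof -
  have "cmod (vec_inner x y) \<le> (\<Sum>i<dim_vec x. \<bar>cmod (x $ i)\<bar> * \<bar>cmod (y $ i)\<bar>)"
    unfolding vec_inner_def by (rule order.trans[OF norm_sum]) (simp add: norm_mult)
  also have "\<dots> \<le> L2_set (\<lambda>i. cmod (x $ i)) {..<dim_vec x} * L2_set (\<lambda>i. cmod (y $ i)) {..<dim_vec x}"
    by (rule L2_set_mult_ineq)
  finally show ?thesis using assms by (simp add: vec_norm2_L2_set)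
qed

lemma vec_norm2_add_le:
  assumes "dim_vec y = dim_vec x"
  shows "vec_norm2 (x + y) \<le> vec_norm2 x + vec_norm2 y"
proof -
  have "vec_norm2 (x + y) = L2_set (\<lambda>i. cmod (x $ i + y $ i)) {..<dim_vec x}"
    unfolding vec_norm2_L2_set using assms by (intro L2_set_cong) auto
  also have "\<dots> \<le> L2_set (\<lambda>i. cmod (x $ i) + cmod (y $ i)) {..<dim_vec x}"
    by (intro L2_set_mono) (auto simp: norm_triangle_ineq)
  also have "\<dots> \<le> vec_norm2 x + vec_norm2 y"
    unfolding vec_norm2_L2_set using assms by (metis L2_set_triangle_ineq)
  finally show ?thesis .
qed

lemma vec_norm2_smult: "vec_norm2 (c \<cdot>\<^sub>v x) = cmod c * vec_norm2 x"
proof -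
  have "vec_norm2 (c \<cdot>\<^sub>v x) = L2_set (\<lambda>i. cmod c * cmod (x $ i)) {..<dim_vec x}"
    unfolding vec_norm2_L2_set by (intro L2_set_cong) (auto simp: norm_mult)
  then show ?thesis unfolding vec_norm2_L2_set by (simp add: L2_set_right_distrib)
qed

lemma vec_norm2_eq_0_imp_zero: "vec_norm2 x = 0 \<Longrightarrow> x = 0\<^sub>v (dim_vec x)"
  unfolding vec_norm2_L2_set by (intro eq_vecI) (auto simp: L2_set_eq_0_iff)

lemma vec_inner_unit_vec_left: "i < n \<Longrightarrow> dim_vec v = n \<Longrightarrow> vec_inner (unit_vec n i) v = v $ i"
  unfolding vec_inner_def by (simp add: unit_vec_def if_distrib[of cnj] if_distrib[of "\<lambda>z. z * _"] cong: if_cong)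

lemma vec_inner_unit_vec_right: "i < n \<Longrightarrow> dim_vec v = n \<Longrightarrow> vec_inner v (unit_vec n i) = cnj (v $ i)"
  unfolding vec_inner_def by (simp add: unit_vec_def if_distrib[of "\<lambda>z. _ * z"] cong: if_cong)

lemma vec_inner_unit_vec_unit_vec:
  "i < n \<Longrightarrow> j < n \<Longrightarrow> vec_inner (unit_vec n i) (unit_vec n j) = (if j = i then 1 else 0)"
  by (simp add: vec_inner_unit_vec_left)

lemma vec_inner_vec_sums:
  assumes dims: "\<And>p. p \<in> A \<Longrightarrow> dim_vec (f p) = n" "\<And>q. q \<in> B \<Longrightarrow> dim_vec (g q) = n"
  shows "vec_inner (vec n (\<lambda>i. a * (\<Sum>p\<in>A. f p $ i))) (vec n (\<lambda>i. b * (\<Sum>q\<in>B. g q $ i)))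
    = cnj a * b * (\<Sum>p\<in>A. \<Sum>q\<in>B. vec_inner (f p) (g q))"
proof -
  have entry: "cnj (a * (\<Sum>p\<in>A. f p $ i)) * (b * (\<Sum>q\<in>B. g q $ i))
      = cnj a * b * (\<Sum>p\<in>A. \<Sum>q\<in>B. cnj (f p $ i) * g q $ i)" for i
  proof -
    have "cnj (a * (\<Sum>p\<in>A. f p $ i)) * (b * (\<Sum>q\<in>B. g q $ i))
        = cnj a * b * ((\<Sum>p\<in>A. cnj (f p $ i)) * (\<Sum>q\<in>B. g q $ i))"
      by (simp add: mult_ac)
    then show ?thesis by (simp only: sum_product)
  qed
  have "vec_inner (vec n (\<lambda>i. a * (\<Sum>p\<in>A. f p $ i))) (vec n (\<lambda>i. b * (\<Sum>q\<in>B. g q $ i)))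
      = (\<Sum>i<n. cnj a * b * (\<Sum>p\<in>A. \<Sum>q\<in>B. cnj (f p $ i) * g q $ i))"
    unfolding vec_inner_def dim_vec by (intro sum.cong refl) (simp only: lessThan_iff index_vec entry)
  also have "\<dots> = cnj a * b * (\<Sum>p\<in>A. \<Sum>q\<in>B. \<Sum>i<n. cnj (f p $ i) * g q $ i)"
    by (simp add: sum_distrib_left sum.swap[of _ "{..<n}"])
  also have "\<dots> = cnj a * b * (\<Sum>p\<in>A. \<Sum>q\<in>B. vec_inner (f p) (g q))"
    using dims by (simp add: vec_inner_def)
  finally show ?thesis .
qed

section \<open>Adjoints and the spectral norm\<close>

lemma mat_adjoint_eq: "mat_adjoint (A :: complex mat) = mat (dim_col A) (dim_row A) (\<lambda>(i, j). cnj (A $$ (j, i)))"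
  unfolding mat_adjoint_def by (auto simp: mat_of_rows_def)

lemma dim_mat_adjoint [simp]:
  "dim_row (mat_adjoint (A :: complex mat)) = dim_col A"
  "dim_col (mat_adjoint (A :: complex mat)) = dim_row A"
  by (simp_all add: mat_adjoint_eq)

lemma carrier_mat_adjoint [simp]: "A \<in> carrier_mat n m \<Longrightarrow> mat_adjoint (A :: complex mat) \<in> carrier_mat m n"
  by (simp add: mat_adjoint_eq)

lemma index_mat_adjoint [simp]:
  "i < dim_col A \<Longrightarrow> j < dim_row A \<Longrightarrow> mat_adjoint (A :: complex mat) $$ (i, j) = cnj (A $$ (j, i))"
  by (simp add: mat_adjoint_eq)

lemma mat_adjoint_mult:
  assumes "A \<in> carrier_mat n l" and "B \<in> carrier_mat l m"
  shows "mat_adjoint (A * B) = mat_adjoint B * mat_adjoint (A :: complex mat)"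
  using assms by (intro eq_matI) (auto simp: scalar_prod_def intro: sum.cong)

lemma mat_adjoint_minus:
  assumes "A \<in> carrier_mat n m" and "B \<in> carrier_mat n m"
  shows "mat_adjoint (A - B) = mat_adjoint A - mat_adjoint (B :: complex mat)"
  using assms by (intro eq_matI) auto

lemma index_mult_mat_adjoint:
  assumes X: "X \<in> carrier_mat n m" and Y: "Y \<in> carrier_mat n l" and "j < m" and "k < l"
  shows "(mat_adjoint X * Y) $$ (j, k) = vec_inner (col X j) (col (Y :: complex mat) k)"
proof -
  have "(mat_adjoint X * Y) $$ (j, k) = (\<Sum>i\<in>{0..<n}. row (mat_adjoint X) j $ i * col Y k $ i)"
    using assms by (simp add: scalar_prod_def)
  also have "\<dots> = vec_inner (col X j) (col Y k)"
    unfolding vec_inner_def atLeast0LessThan using assms by (intro sum.cong) auto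
  finally show ?thesis .
qed

lemma vec_inner_mult_mat_vec:
  assumes A: "A \<in> carrier_mat n m" and x: "x \<in> carrier_vec m" and y: "y \<in> carrier_vec n"
  shows "vec_inner (A *\<^sub>v x) y = vec_inner x (mat_adjoint A *\<^sub>v y)"
proof -
  have "vec_inner (A *\<^sub>v x) y = (\<Sum>i<n. \<Sum>k<m. cnj (A $$ (i, k)) * cnj (x $ k) * y $ i)"
    unfolding vec_inner_def using A x y
    by (intro sum.cong) (auto simp: scalar_prod_def atLeast0LessThan sum_distrib_right mult.assoc)
  also have "\<dots> = (\<Sum>k<m. \<Sum>i<n. cnj (A $$ (i, k)) * cnj (x $ k) * y $ i)"
    by (rule sum.swap)
  also have "\<dots> = vec_inner x (mat_adjoint A *\<^sub>v y)"
    unfolding vec_inner_def using A x y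
    by (intro sum.cong) (auto simp: scalar_prod_def atLeast0LessThan sum_distrib_left mult_ac)
  finally show ?thesis .
qed

lemma vec_norm2_mult_isometry:
  assumes A: "A \<in> carrier_mat n m" and iso: "mat_adjoint A * A = 1\<^sub>m m" and v: "v \<in> carrier_vec m"
  shows "vec_norm2 (A *\<^sub>v v) = vec_norm2 v"
proof -
  have "complex_of_real ((vec_norm2 (A *\<^sub>v v))\<^sup>2) = vec_inner v ((mat_adjoint A * A) *\<^sub>v v)"
    using A v unfolding vec_inner_self[symmetric]
    by (simp add: vec_inner_mult_mat_vec assoc_mult_mat_vec[OF carrier_mat_adjoint[OF A] A v])
  also have "\<dots> = complex_of_real ((vec_norm2 v)\<^sup>2)"
    using iso v by (simp add: vec_inner_self)
  finally show ?thesis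
    by (simp add: vec_norm2_nonneg power2_eq_iff_nonneg del: of_real_power)
qed

lemma exists_vec_norm2_mult_mat_vec_bound:
  "\<exists>K\<ge>0. \<forall>v\<in>carrier_vec (dim_col A). vec_norm2 ((A :: complex mat) *\<^sub>v v) \<le> K * vec_norm2 v"
proof (intro exI[of _ "\<Sum>i<dim_row A. \<Sum>k<dim_col A. cmod (A $$ (i, k))"] conjI ballI)
  show "0 \<le> (\<Sum>i<dim_row A. \<Sum>k<dim_col A. cmod (A $$ (i, k)))" by (simp add: sum_nonneg)
  fix v :: "complex vec" assume v: "v \<in> carrier_vec (dim_col A)"
  have entry: "cmod ((A *\<^sub>v v) $ i) \<le> (\<Sum>k<dim_col A. cmod (A $$ (i, k))) * vec_norm2 v"
    if i: "i < dim_row A" for i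
  proof -
    have "cmod ((A *\<^sub>v v) $ i) \<le> (\<Sum>k<dim_col A. cmod (A $$ (i, k) * v $ k))"
      using i v by (auto simp: scalar_prod_def atLeast0LessThan intro: norm_sum)
    also have "\<dots> \<le> (\<Sum>k<dim_col A. cmod (A $$ (i, k)) * vec_norm2 v)"
    proof (intro sum_mono)
      fix k assume "k \<in> {..<dim_col A}"
      then have "cmod (v $ k) \<le> vec_norm2 v"
        unfolding vec_norm2_L2_set using v by (intro member_le_L2_set) auto
      then show "cmod (A $$ (i, k) * v $ k) \<le> cmod (A $$ (i, k)) * vec_norm2 v"
        by (simp add: norm_mult mult_left_mono)
    qed
    finally show ?thesis by (simp add: sum_distrib_right)
  qed
  have "vec_norm2 (A *\<^sub>v v) \<le> (\<Sum>i<dim_row A. \<bar>cmod ((A *\<^sub>v v) $ i)\<bar>)"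
    unfolding vec_norm2_L2_set dim_mult_mat_vec by (rule L2_set_le_sum_abs)
  also have "\<dots> \<le> (\<Sum>i<dim_row A. (\<Sum>k<dim_col A. cmod (A $$ (i, k))) * vec_norm2 v)"
    using entry by (intro sum_mono) auto
  finally show "vec_norm2 (A *\<^sub>v v) \<le> (\<Sum>i<dim_row A. \<Sum>k<dim_col A. cmod (A $$ (i, k))) * vec_norm2 v"
    by (simp add: sum_distrib_right)
qed

lemma bdd_above_spec_norm_set:
  "bdd_above {vec_norm2 ((A :: complex mat) *\<^sub>v v) | v. v \<in> carrier_vec (dim_col A) \<and> vec_norm2 v \<le> 1}"
proof -
  obtain K where K: "K \<ge> 0" "\<forall>v\<in>carrier_vec (dim_col A). vec_norm2 (A *\<^sub>v v) \<le> K * vec_norm2 v"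
    using exists_vec_norm2_mult_mat_vec_bound by blast
  have "vec_norm2 (A *\<^sub>v v) \<le> K" if "v \<in> carrier_vec (dim_col A)" "vec_norm2 v \<le> 1" for v
    using K that by (meson mult_left_le order.trans)
  then show ?thesis by (intro bdd_aboveI[of _ K]) blast
qed

lemma mult_mat_vec_zero_vec [simp]: "(A :: complex mat) *\<^sub>v 0\<^sub>v (dim_col A) = 0\<^sub>v (dim_row A)"
  by (intro eq_vecI) auto

lemma spec_norm_upper:
  "v \<in> carrier_vec (dim_col A) \<Longrightarrow> vec_norm2 v \<le> 1 \<Longrightarrow> vec_norm2 ((A :: complex mat) *\<^sub>v v) \<le> spec_norm A"
  unfolding spec_norm_def by (intro cSup_upper bdd_above_spec_norm_set) blast

lemma spec_norm_nonneg: "spec_norm (A :: complex mat) \<ge> 0"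
  using spec_norm_upper[of "0\<^sub>v (dim_col A)" A] by simp

lemma vec_norm2_mult_mat_vec_le:
  assumes v: "v \<in> carrier_vec (dim_col A)"
  shows "vec_norm2 ((A :: complex mat) *\<^sub>v v) \<le> spec_norm A * vec_norm2 v"
proof (cases "vec_norm2 v = 0")
  case True
  then show ?thesis using v vec_norm2_eq_0_imp_zero[of v] by auto
next
  case False
  define c where "c = vec_norm2 v"
  have c: "c > 0" using False vec_norm2_nonneg[of v] unfolding c_def by linarith
  have "A *\<^sub>v (complex_of_real (1 / c) \<cdot>\<^sub>v v) = complex_of_real (1 / c) \<cdot>\<^sub>v (A *\<^sub>v v)"
    using v by (metis carrier_mat_triv mult_mat_vec)
  moreover have "vec_norm2 (A *\<^sub>v (complex_of_real (1 / c) \<cdot>\<^sub>v v)) \<le> spec_norm A"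
    using v c by (intro spec_norm_upper) (auto simp: vec_norm2_smult norm_divide c_def)
  ultimately have "vec_norm2 (A *\<^sub>v v) / c \<le> spec_norm A"
    using c by (simp add: vec_norm2_smult norm_divide)
  then show ?thesis using c unfolding c_def by (simp add: field_simps)
qed

lemma spec_norm_le:
  assumes "c \<ge> 0"
    and "\<And>v. v \<in> carrier_vec (dim_col A) \<Longrightarrow> vec_norm2 ((A :: complex mat) *\<^sub>v v) \<le> c * vec_norm2 v"
  shows "spec_norm A \<le> c"
  unfolding spec_norm_def
proof (rule cSup_least)
  show "{vec_norm2 (A *\<^sub>v v) |v. v \<in> carrier_vec (dim_col A) \<and> vec_norm2 v \<le> 1} \<noteq> {}"
    by (auto intro!: exI[of _ "0\<^sub>v (dim_col A)"])
next
  fix x assume "x \<in> {vec_norm2 (A *\<^sub>v v) |v. v \<in> carrier_vec (dim_col A) \<and> vec_norm2 v \<le> 1}"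
  then obtain v where "v \<in> carrier_vec (dim_col A)" "vec_norm2 v \<le> 1" "x = vec_norm2 (A *\<^sub>v v)"
    by blast
  with assms show "x \<le> c" by (meson mult_left_le order.trans)
qed

lemma spec_norm_mult_le:
  assumes A: "A \<in> carrier_mat n m" and B: "B \<in> carrier_mat m l"
    and a: "spec_norm A \<le> a" and b: "spec_norm (B :: complex mat) \<le> b"
  shows "spec_norm (A * B) \<le> a * b"
proof (rule spec_norm_le)
  show "a * b \<ge> 0" using a b spec_norm_nonneg[of A] spec_norm_nonneg[of B] by simp
  have bound: "vec_norm2 (X *\<^sub>v w) \<le> c * vec_norm2 w"
    if "w \<in> carrier_vec (dim_col X)" "spec_norm X \<le> c" for X :: "complex mat" and w c
    using that by (meson order.trans mult_right_mono vec_norm2_mult_mat_vec_le vec_norm2_nonneg)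
  fix v :: "complex vec" assume "v \<in> carrier_vec (dim_col (A * B))"
  then have v: "v \<in> carrier_vec l" using B by simp
  have "vec_norm2 ((A * B) *\<^sub>v v) = vec_norm2 (A *\<^sub>v (B *\<^sub>v v))" using A B v by simp
  also have "\<dots> \<le> a * vec_norm2 (B *\<^sub>v v)"
    using A B v a by (intro bound) auto
  also have "\<dots> \<le> a * (b * vec_norm2 v)"
    using B v a b spec_norm_nonneg[of A] by (intro mult_left_mono bound) auto
  finally show "vec_norm2 ((A * B) *\<^sub>v v) \<le> a * b * vec_norm2 v"
    by (simp add: mult.assoc)
qed

lemma spec_norm_add_le:
  assumes A: "A \<in> carrier_mat n m" and B: "B \<in> carrier_mat n m"
  shows "spec_norm (A + B) \<le> spec_norm A + spec_norm (B :: complex mat)"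
proof (rule spec_norm_le)
  fix v :: "complex vec" assume "v \<in> carrier_vec (dim_col (A + B))"
  then have v: "v \<in> carrier_vec m" using B by simp
  have "vec_norm2 ((A + B) *\<^sub>v v) = vec_norm2 (A *\<^sub>v v + B *\<^sub>v v)"
    using A B v by (simp add: add_mult_distrib_mat_vec)
  also have "\<dots> \<le> vec_norm2 (A *\<^sub>v v) + vec_norm2 (B *\<^sub>v v)"
    using A B by (intro vec_norm2_add_le) simp
  also have "\<dots> \<le> spec_norm A * vec_norm2 v + spec_norm B * vec_norm2 v"
    using A B v by (intro add_mono vec_norm2_mult_mat_vec_le) auto
  finally show "vec_norm2 ((A + B) *\<^sub>v v) \<le> (spec_norm A + spec_norm B) * vec_norm2 v"
    by (simp add: distrib_right)
qed (simp add: add_nonneg_nonneg spec_norm_nonneg)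

lemma spec_norm_adjoint_le:
  assumes A: "A \<in> carrier_mat n m"
  shows "spec_norm (mat_adjoint A) \<le> spec_norm (A :: complex mat)"
proof (rule spec_norm_le[OF spec_norm_nonneg])
  fix w :: "complex vec" assume "w \<in> carrier_vec (dim_col (mat_adjoint A))"
  then have w: "w \<in> carrier_vec n" using A by simp
  define x where "x = mat_adjoint A *\<^sub>v w"
  have x: "x \<in> carrier_vec m" unfolding x_def using carrier_mat_adjoint[OF A] w by simp
  have "(vec_norm2 x)\<^sup>2 = cmod (vec_inner (A *\<^sub>v x) w)"
    using vec_inner_self[of x] vec_inner_mult_mat_vec[OF A x w] unfolding x_def[symmetric]
    by (metis abs_power2 norm_of_real)
  also have "\<dots> \<le> vec_norm2 (A *\<^sub>v x) * vec_norm2 w"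
    using A w by (intro vec_inner_Cauchy_Schwarz) simp
  also have "\<dots> \<le> spec_norm A * vec_norm2 x * vec_norm2 w"
    using A x by (intro mult_right_mono vec_norm2_mult_mat_vec_le vec_norm2_nonneg) simp
  finally have "vec_norm2 x * vec_norm2 x \<le> (spec_norm A * vec_norm2 w) * vec_norm2 x"
    by (simp add: power2_eq_square mult_ac)
  then show "vec_norm2 (mat_adjoint A *\<^sub>v w) \<le> spec_norm A * vec_norm2 w"
    using vec_norm2_nonneg[of x] spec_norm_nonneg[of A] vec_norm2_nonneg[of w] unfolding x_def
    by (metis mult_right_le_imp_le mult_nonneg_nonneg order_le_less)
qed

lemma spec_norm_isometry_le:
  assumes "A \<in> carrier_mat n m" and "mat_adjoint A * A = 1\<^sub>m m"
  shows "spec_norm (A :: complex mat) \<le> 1"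
  using assms by (intro spec_norm_le) (auto simp: vec_norm2_mult_isometry)

lemma spec_norm_unitary_le:
  assumes "U \<in> carrier_mat n n" and "unitary_mat U"
  shows "spec_norm U \<le> 1"
  using assms unfolding unitary_mat_def by (intro spec_norm_isometry_le) auto

lemma mult_minus_mult_mat:
  assumes "A \<in> carrier_mat n m" "A' \<in> carrier_mat n m" "B \<in> carrier_mat m l" "B' \<in> carrier_mat m l"
  shows "A * B - A' * B' = A * (B - B') + (A - A') * (B' :: complex mat)"
proof -
  have "A * (B - B') + (A - A') * B' = (A * B - A * B') + (A * B' - A' * B')"
    using assms by (simp add: mult_minus_distrib_mat minus_mult_distrib_mat)
  also have "\<dots> = A * B - A' * B'"
    using assms by (intro eq_matI) auto
  finally show ?thesis by simp
qed

lemma sandwich_diff_eq: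
  fixes P S T T' :: "complex mat"
  assumes P: "P \<in> carrier_mat M N" and S: "S \<in> carrier_mat M M"
    and T: "T \<in> carrier_mat M M" and T': "T' \<in> carrier_mat M M"
  shows "mat_adjoint P * mat_adjoint T' * S * T' * P - mat_adjoint P * mat_adjoint T * S * T * P
    = (mat_adjoint P * mat_adjoint T' * S) * ((T' - T) * P) + (mat_adjoint P * mat_adjoint (T' - T) * S) * (T * P)"
proof -
  define A where "A = mat_adjoint P * mat_adjoint T' * S"
  define A0 where "A0 = mat_adjoint P * mat_adjoint T * S"
  have A: "A \<in> carrier_mat N M" and A0: "A0 \<in> carrier_mat N M"
    unfolding A_def A0_def using P S T T' by auto
  have "T' * P - T * P = (T' - T) * P"
    using P T T' by (simp add: minus_mult_distrib_mat)
  moreover have "A - A0 = (mat_adjoint P * mat_adjoint T' - mat_adjoint P * mat_adjoint T) * S"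
    unfolding A_def A0_def using P S T T' by (intro minus_mult_distrib_mat[symmetric]) auto
  moreover have "\<dots> = mat_adjoint P * mat_adjoint (T' - T) * S"
    unfolding mat_adjoint_minus[OF T' T]
    using mult_minus_distrib_mat[OF carrier_mat_adjoint[OF P] carrier_mat_adjoint[OF T'] carrier_mat_adjoint[OF T]]
    by simp
  moreover have "T' * P \<in> carrier_mat M N" "T * P \<in> carrier_mat M N" using P T T' by auto
  ultimately have "A * (T' * P) - A0 * (T * P) = A * ((T' - T) * P) + (mat_adjoint P * mat_adjoint (T' - T) * S) * (T * P)"
    using mult_minus_mult_mat[OF A A0] by simp
  moreover have "mat_adjoint P * mat_adjoint T' * S * T' * P - mat_adjoint P * mat_adjoint T * S * T * P
      = A * (T' * P) - A0 * (T * P)"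
    using assoc_mult_mat[OF A T' P] assoc_mult_mat[OF A0 T P] unfolding A_def A0_def by simp
  ultimately show ?thesis unfolding A_def by simp
qed

lemma spec_norm_sandwich_diff_le:
  fixes P S T T' :: "complex mat"
  assumes P: "P \<in> carrier_mat M N" and S: "S \<in> carrier_mat M M"
    and T: "T \<in> carrier_mat M M" and T': "T' \<in> carrier_mat M M"
    and P1: "spec_norm P \<le> 1" and S1: "spec_norm S \<le> 1"
    and T1: "spec_norm T \<le> 1" and T'1: "spec_norm T' \<le> 1"
  shows "spec_norm (mat_adjoint P * mat_adjoint T' * S * T' * P - mat_adjoint P * mat_adjoint T * S * T * P)
           \<le> 2 * spec_norm (T' - T)"
proof -
  define D where "D = T' - T"
  have D: "D \<in> carrier_mat M M" unfolding D_def using minus_carrier_mat[OF T] .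
  have P_adj: "spec_norm (mat_adjoint P) \<le> 1" and T'_adj: "spec_norm (mat_adjoint T') \<le> 1"
    and D_adj: "spec_norm (mat_adjoint D) \<le> spec_norm D"
    using P P1 T' T'1 D spec_norm_adjoint_le by (auto intro: order.trans)
  have A: "spec_norm (mat_adjoint P * mat_adjoint T' * S) \<le> 1 * 1 * 1"
    using P T' S P_adj T'_adj S1
    by (intro spec_norm_mult_le[where m = M] spec_norm_mult_le[where m = M]) auto
  have DP: "spec_norm (D * P) \<le> spec_norm D * 1"
    using D P P1 by (intro spec_norm_mult_le) auto
  have PDS: "spec_norm (mat_adjoint P * mat_adjoint D * S) \<le> 1 * spec_norm D * 1"
    using P D S P_adj D_adj S1
    by (intro spec_norm_mult_le[where m = M] spec_norm_mult_le[where m = M]) auto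
  have TP: "spec_norm (T * P) \<le> 1 * 1"
    using T P T1 P1 by (intro spec_norm_mult_le) auto
  have "spec_norm ((mat_adjoint P * mat_adjoint T' * S) * (D * P)) \<le> (1 * 1 * 1) * (spec_norm D * 1)"
    using P T' S D by (intro spec_norm_mult_le[OF _ _ A DP, where l = N]) auto
  moreover have "spec_norm ((mat_adjoint P * mat_adjoint D * S) * (T * P)) \<le> (1 * spec_norm D * 1) * (1 * 1)"
    using P D S T by (intro spec_norm_mult_le[OF _ _ PDS TP, where n = N and m = M and l = N]) auto
  ultimately have "spec_norm ((mat_adjoint P * mat_adjoint T' * S) * (D * P) + (mat_adjoint P * mat_adjoint D * S) * (T * P))
      \<le> (1 * 1 * 1) * (spec_norm D * 1) + (1 * spec_norm D * 1) * (1 * 1)"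
    using P S T T' D by (intro order.trans[OF spec_norm_add_le add_mono]) auto
  then show ?thesis
    unfolding sandwich_diff_eq[OF P S T T'] D_def[symmetric] by simp
qed

section \<open>Digit expansions, tensor products and the register reversal\<close>

fun from_digits :: "nat \<Rightarrow> nat list \<Rightarrow> nat" where
  "from_digits b [] = 0"
| "from_digits b (a # ds) = a * b ^ length ds + from_digits b ds"

definition digit_lists :: "nat \<Rightarrow> nat \<Rightarrow> nat list set" where
  "digit_lists b m = {ds. length ds = m \<and> (\<forall>x\<in>set ds. x < b)}"

lemma length_digits [simp]: "length (digits b m k) = m"
  by (induction m) auto

lemma digits_less: "b > 0 \<Longrightarrow> x \<in> set (digits b m k) \<Longrightarrow> x < b"
  by (induction m) auto

lemma digits_mod_power: "digits b m k = digits b m (k mod b ^ m)"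
proof -
  have digit: "(k div b ^ t) mod b = ((k mod b ^ M) div b ^ t) mod b" if "t < M" for t M
  proof -
    have "b ^ M = b ^ t * b ^ (M - t)"
      using that by (simp flip: power_add)
    then have "(k mod b ^ M) div b ^ t = (k div b ^ t) mod b ^ (M - t)"
      by (metis add.right_neutral div_mult_self4 mod_by_0 mod_div_trivial mod_mult2_eq mod_mult_self2_is_0)
    moreover have "b dvd b ^ (M - t)" using that by simp
    ultimately show ?thesis by (simp add: mod_mod_cancel)
  qed
  have "m \<le> M \<Longrightarrow> digits b m k = digits b m (k mod b ^ M)" for M
    by (induction m) (auto intro: digit)
  then show ?thesis by simp
qed

lemma from_digits_less: "\<forall>x\<in>set ds. x < b \<Longrightarrow> from_digits b ds < b ^ length ds"
proof (induction ds)
  case (Cons a ds)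
  then have "a * b ^ length ds + from_digits b ds < (a + 1) * b ^ length ds"
    by simp
  also have "\<dots> \<le> b * b ^ length ds"
    using Cons.prems by (intro mult_right_mono) auto
  finally show ?case by simp
qed simp

lemma digits_from_digits: "\<forall>x\<in>set ds. x < b \<Longrightarrow> digits b (length ds) (from_digits b ds) = ds"
proof (induction ds)
  case (Cons a ds)
  have "from_digits b ds < b ^ length ds" using Cons.prems by (intro from_digits_less) auto
  then show ?case
    using Cons digits_mod_power[of b "length ds" "a * b ^ length ds + from_digits b ds"] by simp
qed simp

lemma from_digits_digits: "k < b ^ m \<Longrightarrow> from_digits b (digits b m k) = k"
proof (induction m arbitrary: k)
  case (Suc m)
  have "k div b ^ m < b"
    using Suc.prems by (metis less_mult_imp_div_less power_Suc2 mult.commute)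
  moreover have "from_digits b (digits b m (k mod b ^ m)) = k mod b ^ m"
    using Suc.IH Suc.prems by (cases "b = 0") auto
  ultimately show ?case
    using div_mult_mod_eq[of k "b ^ m"] by (simp add: digits_mod_power[of b m k, symmetric])
qed simp

lemma bij_betw_digits: "b > 0 \<Longrightarrow> bij_betw (digits b m) {..<b ^ m} (digit_lists b m)"
  by (rule bij_betw_byWitness[where f' = "from_digits b"])
    (auto simp: digit_lists_def from_digits_digits digits_from_digits digits_less from_digits_less)

lemma sum_digits: "b > 0 \<Longrightarrow> (\<Sum>k<b ^ m. F (digits b m k)) = (\<Sum>ds\<in>digit_lists b m. F ds)"
  using sum.reindex_bij_betw[OF bij_betw_digits] by metis

lemma digit_lists_Suc: "digit_lists b (Suc m) = (\<lambda>(a, ds). a # ds) ` ({..<b} \<times> digit_lists b m)"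
  unfolding digit_lists_def by (auto simp: image_iff length_Suc_conv)

lemma sum_digit_lists_prod_list:
  fixes f :: "'v \<Rightarrow> nat \<Rightarrow> complex"
  shows "(\<Sum>ds\<in>digit_lists b (length vs). prod_list (map2 f vs ds)) = prod_list (map (\<lambda>v. \<Sum>a<b. f v a) vs)"
proof (induction vs)
  case Nil
  have "digit_lists b 0 = {[]}" unfolding digit_lists_def by auto
  then show ?case by simp
next
  case (Cons v vs)
  have inj: "inj_on (\<lambda>(a, ds). a # ds) ({..<b} \<times> digit_lists b (length vs))"
    by (auto simp: inj_on_def)
  have "(\<Sum>ds\<in>digit_lists b (length (v # vs)). prod_list (map2 f (v # vs) ds))
      = (\<Sum>a<b. \<Sum>ds\<in>digit_lists b (length vs). f v a * prod_list (map2 f vs ds))"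
    unfolding length_Cons digit_lists_Suc sum.reindex[OF inj]
    by (simp add: case_prod_beta comp_def sum.cartesian_product)
  also have "\<dots> = (\<Sum>a<b. f v a) * (\<Sum>ds\<in>digit_lists b (length vs). prod_list (map2 f vs ds))"
    by (rule sum_product[symmetric])
  finally show ?case using Cons by simp
qed

lemma dim_tensor_list [simp]: "dim_vec (tensor_list b vs) = b ^ length vs"
  unfolding tensor_list_def by simp

lemma index_tensor_list:
  "k < b ^ length vs \<Longrightarrow> tensor_list b vs $ k = prod_list (map2 (\<lambda>v a. v $ a) vs (digits b (length vs) k))"
  unfolding tensor_list_def by simp

lemma vec_inner_tensor_list:
  assumes b: "b > 0" and len: "length us = length vs" and dim: "\<forall>u\<in>set us. dim_vec u = b"
  shows "vec_inner (tensor_list b us) (tensor_list b vs) = prod_list (map2 vec_inner us vs)"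
proof -
  let ?f = "\<lambda>(u, v) a. cnj (u $ a) * v $ a"
  have cnj_prod: "cnj (prod_list (map2 (\<lambda>v a. v $ a) us ds)) * prod_list (map2 (\<lambda>v a. v $ a) vs ds)
      = prod_list (map2 ?f (zip us vs) ds)" if "length ds = length vs" for ds
    using len that[symmetric] by (induction us vs ds rule: list_induct3) (simp_all add: mult_ac)
  have "vec_inner (tensor_list b us) (tensor_list b vs)
      = (\<Sum>k<b ^ length (zip us vs). prod_list (map2 ?f (zip us vs) (digits b (length (zip us vs)) k)))"
    unfolding vec_inner_def using len by (intro sum.cong) (auto simp: index_tensor_list cnj_prod)
  also have "\<dots> = prod_list (map (\<lambda>w. \<Sum>a<b. ?f w a) (zip us vs))"
    by (subst sum_digits[OF b]) (rule sum_digit_lists_prod_list)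
  also have "map (\<lambda>w. \<Sum>a<b. ?f w a) (zip us vs) = map2 vec_inner us vs"
    using dim by (auto simp: vec_inner_def dest: set_zip_leftD)
  finally show ?thesis .
qed

definition rev_index :: "nat \<Rightarrow> nat \<Rightarrow> nat \<Rightarrow> nat" where
  "rev_index b m i = from_digits b (rev (digits b m i))"

definition reverse_mat :: "nat \<Rightarrow> nat \<Rightarrow> complex mat" where
  "reverse_mat b m = mat (b ^ m) (b ^ m) (\<lambda>(i, k). if digits b m i = rev (digits b m k) then 1 else 0)"

lemma Swap_eq_reverse_mat: "Swap N r = reverse_mat (2 * N) (2 * r + 2)"
  unfolding Swap_def reverse_mat_def Let_def ..

lemma reverse_mat_carrier: "reverse_mat b m \<in> carrier_mat (b ^ m) (b ^ m)"
  unfolding reverse_mat_def by simp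

lemma rev_index_less: "b > 0 \<Longrightarrow> rev_index b m i < b ^ m"
  unfolding rev_index_def using from_digits_less[of "rev (digits b m i)" b] digits_less by auto

lemma digits_rev_index: "b > 0 \<Longrightarrow> digits b m (rev_index b m i) = rev (digits b m i)"
  unfolding rev_index_def using digits_from_digits[of "rev (digits b m i)" b] digits_less by auto

lemma rev_index_rev_index: "b > 0 \<Longrightarrow> i < b ^ m \<Longrightarrow> rev_index b m (rev_index b m i) = i"
  unfolding rev_index_def[of b m "rev_index b m i"] by (simp add: digits_rev_index from_digits_digits)

lemma reverse_mat_mult_vec:
  assumes b: "b > 0" and x: "x \<in> carrier_vec (b ^ m)"
  shows "reverse_mat b m *\<^sub>v x = vec (b ^ m) (\<lambda>i. x $ rev_index b m i)"
proof (rule eq_vecI)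
  fix i assume "i < dim_vec (vec (b ^ m) (\<lambda>i. x $ rev_index b m i))"
  then have i: "i < b ^ m" by simp
  have match: "digits b m i = rev (digits b m k) \<longleftrightarrow> k = rev_index b m i" if "k < b ^ m" for k
    using that digits_rev_index[OF b, of m i] from_digits_digits[OF that]
    unfolding rev_index_def by auto
  have "(reverse_mat b m *\<^sub>v x) $ i = (\<Sum>k<b ^ m. (if k = rev_index b m i then 1 else 0) * x $ k)"
    using i x match unfolding reverse_mat_def
    by (simp add: scalar_prod_def atLeast0LessThan)
  also have "\<dots> = x $ rev_index b m i"
    using rev_index_less[OF b] by (simp add: if_distrib[of "\<lambda>c. c * _"] cong: if_cong)
  finally show "(reverse_mat b m *\<^sub>v x) $ i = vec (b ^ m) (\<lambda>i. x $ rev_index b m i) $ i"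
    using i by simp
qed (simp add: reverse_mat_def)

lemma prod_list_map2_conv_prod:
  "length xs = length ys \<Longrightarrow> prod_list (map2 f xs ys) = (\<Prod>i<length xs. f (xs ! i) (ys ! i))"
  by (simp add: prod.list_conv_set_nth atLeast0LessThan)

lemma prod_list_map2_rev:
  fixes f :: "'a \<Rightarrow> 'b \<Rightarrow> 'c :: comm_monoid_mult"
  assumes "length xs = length ys"
  shows "prod_list (map2 f xs (rev ys)) = prod_list (map2 f (rev xs) ys)"
proof -
  have "zip (rev xs) ys = rev (zip xs (rev ys))"
    using assms zip_rev[of xs "rev ys"] by simp
  then show ?thesis by (simp only: rev_map[symmetric] prod_list.rev)
qed

lemma reverse_mat_tensor_list:
  assumes b: "b > 0" and len: "length vs = m"
  shows "reverse_mat b m *\<^sub>v tensor_list b vs = tensor_list b (rev vs)"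
proof (rule eq_vecI)
  have x: "tensor_list b vs \<in> carrier_vec (b ^ m)" using len by (intro carrier_vecI) simp
  fix i assume "i < dim_vec (tensor_list b (rev vs))"
  then have i: "i < b ^ m" using len by simp
  have "(reverse_mat b m *\<^sub>v tensor_list b vs) $ i = tensor_list b vs $ rev_index b m i"
    unfolding reverse_mat_mult_vec[OF b x] using i by (rule index_vec)
  also have "\<dots> = prod_list (map2 (\<lambda>v a. v $ a) vs (rev (digits b m i)))"
    using len rev_index_less[OF b, of m i] by (simp add: index_tensor_list digits_rev_index[OF b])
  also have "\<dots> = prod_list (map2 (\<lambda>v a. v $ a) (rev vs) (digits b m i))"
    using len by (intro prod_list_map2_rev) simp
  also have "\<dots> = tensor_list b (rev vs) $ i"
    using i len by (simp add: index_tensor_list)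
  finally show "(reverse_mat b m *\<^sub>v tensor_list b vs) $ i = tensor_list b (rev vs) $ i" .
next
  show "dim_vec (reverse_mat b m *\<^sub>v tensor_list b vs) = dim_vec (tensor_list b (rev vs))"
    using len reverse_mat_carrier[of b m] by simp
qed

lemma spec_norm_reverse_mat_le:
  assumes b: "b > 0"
  shows "spec_norm (reverse_mat b m) \<le> 1"
proof (rule spec_norm_le)
  fix x :: "complex vec" assume "x \<in> carrier_vec (dim_col (reverse_mat b m))"
  then have x: "x \<in> carrier_vec (b ^ m)" using reverse_mat_carrier[of b m] by simp
  have "bij_betw (rev_index b m) {..<b ^ m} {..<b ^ m}"
    by (rule bij_betw_byWitness[where f' = "rev_index b m"])
      (auto simp: rev_index_rev_index[OF b] rev_index_less[OF b])
  then have "(\<Sum>i<b ^ m. (cmod (x $ rev_index b m i))\<^sup>2) = (\<Sum>i<b ^ m. (cmod (x $ i))\<^sup>2)"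
    by (rule sum.reindex_bij_betw)
  then show "vec_norm2 (reverse_mat b m *\<^sub>v x) \<le> 1 * vec_norm2 x"
    using x by (simp add: vec_norm2_def reverse_mat_mult_vec[OF b x])
qed simp

section \<open>Walks in the sparsity graph and matrix powers\<close>

lemma finite_paths: "finite (paths N Nb r k)"
proof -
  have "paths N Nb r k \<subseteq> {xs. set xs \<subseteq> {..<N} \<and> length xs = Suc r}"
    unfolding paths_def by auto
  then show ?thesis using finite_lists_length_eq[of "{..<N}" "Suc r"] finite_subset by blast
qed

lemma paths_0: "k < N \<Longrightarrow> paths N Nb 0 k = {[k]}"
  unfolding paths_def by (auto simp: length_Suc_conv)

lemma paths_Suc_snoc:
  assumes j: "j < N"
  shows "{p \<in> paths N Nb (Suc r) k. p ! Suc r = j} = (\<lambda>q. q @ [j]) ` {q \<in> paths N Nb r k. j \<in> Nb (q ! r)}"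
proof (intro equalityI subsetI)
  fix p assume "p \<in> {p \<in> paths N Nb (Suc r) k. p ! Suc r = j}"
  then have p: "p \<in> paths N Nb (Suc r) k" "p ! Suc r = j" by auto
  then have len: "length p = Suc (Suc r)" by (simp add: paths_def)
  define q where "q = take (Suc r) p"
  have "p = q @ [j]"
    unfolding q_def using len p(2) take_Suc_conv_app_nth[of "Suc r" p] by simp
  moreover have "q \<in> paths N Nb r k" "j \<in> Nb (q ! r)"
    using p len unfolding q_def paths_def by (auto simp: nth_take dest: in_set_takeD)
  ultimately show "p \<in> (\<lambda>q. q @ [j]) ` {q \<in> paths N Nb r k. j \<in> Nb (q ! r)}" by blast
next
  fix p assume "p \<in> (\<lambda>q. q @ [j]) ` {q \<in> paths N Nb r k. j \<in> Nb (q ! r)}"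
  then obtain q where q: "q \<in> paths N Nb r k" "j \<in> Nb (q ! r)" and p: "p = q @ [j]" by blast
  have "length q = Suc r" using q(1) by (simp add: paths_def)
  then show "p \<in> {p \<in> paths N Nb (Suc r) k. p ! Suc r = j}"
    using q j unfolding p paths_def by (auto simp: nth_append less_Suc_eq)
qed

lemma path_last_less: "q \<in> paths N Nb r k \<Longrightarrow> q ! r < N"
  unfolding paths_def by auto

lemma pow_mat_smult:
  assumes A: "A \<in> carrier_mat n n"
  shows "(a \<cdot>\<^sub>m A) ^\<^sub>m k = (a ^ k :: complex) \<cdot>\<^sub>m (A ^\<^sub>m k)"
proof (induction k)
  case 0
  then show ?case using A by (intro eq_matI) auto
next
  case (Suc k)
  have Ak: "A ^\<^sub>m k \<in> carrier_mat n n" using A by simp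
  have "(a \<cdot>\<^sub>m A) ^\<^sub>m Suc k = a ^ k \<cdot>\<^sub>m (A ^\<^sub>m k * (a \<cdot>\<^sub>m A))"
    unfolding pow_mat.simps(2) Suc by (rule mult_smult_assoc_mat[OF Ak smult_carrier_mat[OF A]])
  also have "\<dots> = a ^ Suc k \<cdot>\<^sub>m (A ^\<^sub>m Suc k)"
    unfolding mult_smult_distrib[OF Ak A] using Ak A by (intro eq_matI) auto
  finally show ?case .
qed

lemma mat_pow_eq_sum_paths:
  assumes H: "H \<in> carrier_mat N N"
    and supp: "\<forall>j<N. {k. k < N \<and> H $$ (j, k) \<noteq> 0} \<subseteq> Nb j"
    and k: "k < N" and j: "j < N"
  shows "(H ^\<^sub>m r) $$ (k, j) = (\<Sum>q\<in>{q \<in> paths N Nb r k. q ! r = j}. \<Prod>t<r. H $$ (q ! t, q ! Suc t))"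
  using j
proof (induction r arbitrary: j)
  case 0
  have "{q \<in> paths N Nb 0 k. q ! 0 = j} = (if k = j then {[k]} else {})" using paths_0[OF k] by auto
  then show ?case using H k 0 by auto
next
  case (Suc r)
  let ?P = "paths N Nb r k"
  let ?w = "\<lambda>q. \<Prod>t<r. H $$ (q ! t, q ! Suc t)"
  have "(H ^\<^sub>m Suc r) $$ (k, j) = (\<Sum>l<N. (H ^\<^sub>m r) $$ (k, l) * H $$ (l, j))"
    using H k Suc.prems by (simp add: scalar_prod_def atLeast0LessThan)
  also have "\<dots> = (\<Sum>l<N. \<Sum>q\<in>{q \<in> ?P. q ! r = l}. ?w q * H $$ (q ! r, j))"
    using Suc.IH by (simp add: sum_distrib_right)
  also have "\<dots> = (\<Sum>q\<in>?P. ?w q * H $$ (q ! r, j))"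
    by (rule sum.group[OF finite_paths finite_lessThan]) (auto intro: path_last_less)
  also have "\<dots> = (\<Sum>q\<in>{q \<in> ?P. j \<in> Nb (q ! r)}. ?w q * H $$ (q ! r, j))"
  proof (intro sum.mono_neutral_right finite_paths ballI)
    fix q assume "q \<in> ?P - {q \<in> ?P. j \<in> Nb (q ! r)}"
    then have "H $$ (q ! r, j) = 0"
      using supp Suc.prems path_last_less[of q N Nb r k] by blast
    then show "?w q * H $$ (q ! r, j) = 0" by simp
  qed auto
  also have "\<dots> = (\<Sum>q\<in>{q \<in> ?P. j \<in> Nb (q ! r)}. \<Prod>t<Suc r. H $$ ((q @ [j]) ! t, (q @ [j]) ! Suc t))"
    by (intro sum.cong refl) (auto simp: paths_def nth_append)
  also have "\<dots> = (\<Sum>p\<in>{p \<in> paths N Nb (Suc r) k. p ! Suc r = j}. \<Prod>t<Suc r. H $$ (p ! t, p ! Suc t))"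
    unfolding paths_Suc_snoc[OF Suc.prems]
    by (rule sum.reindex[symmetric, unfolded comp_def]) (auto simp: inj_on_def)
  finally show ?case .
qed

section \<open>The states Psi and the exact block encoding\<close>

definition edge_register :: "nat \<Rightarrow> complex mat \<Rightarrow> (nat \<Rightarrow> nat \<Rightarrow> complex) \<Rightarrow> nat list \<Rightarrow> nat \<Rightarrow> complex vec" where
  "edge_register N H \<sigma> p s = \<sigma> (p ! s) (p ! Suc s) \<cdot>\<^sub>v unit_vec (2 * N) (p ! Suc s)
     + complex_of_real (sqrt (1 - cmod (H $$ (p ! s, p ! Suc s)))) \<cdot>\<^sub>v unit_vec (2 * N) (p ! Suc s + N)"

definition path_registers ::
    "nat \<Rightarrow> complex mat \<Rightarrow> (nat \<Rightarrow> nat \<Rightarrow> complex) \<Rightarrow> nat \<Rightarrow> nat \<Rightarrow> nat list \<Rightarrow> complex vec list" where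
  "path_registers N H \<sigma> r j0 p =
     map (unit_vec (2 * N)) p @ [unit_vec (2 * N) j0] @ map (edge_register N H \<sigma> p) [0..<r]"

lemma Psi_eq_sum_paths:
  "Psi N H Nb d \<sigma> r j0 = vec ((2 * N) ^ (2 * r + 2)) (\<lambda>k. complex_of_real (1 / sqrt (real d ^ r))
     * (\<Sum>p\<in>paths N Nb r j0. tensor_list (2 * N) (path_registers N H \<sigma> r j0 p) $ k))"
  unfolding Psi_def Let_def path_registers_def edge_register_def ..

lemma length_path_registers [simp]:
  "length p = Suc r \<Longrightarrow> length (path_registers N H \<sigma> r j0 p) = 2 * r + 2"
  unfolding path_registers_def by simp

lemma dim_path_registers: "v \<in> set (path_registers N H \<sigma> r j0 p) \<Longrightarrow> dim_vec v = 2 * N"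
  unfolding path_registers_def edge_register_def by auto

lemma vec_inner_unit_vec_edge_register:
  assumes "a < N" and "p ! Suc s < N"
  shows "vec_inner (unit_vec (2 * N) a) (edge_register N H \<sigma> p s)
    = (if a = p ! Suc s then \<sigma> (p ! s) (p ! Suc s) else 0)"
  using assms by (simp add: vec_inner_unit_vec_left edge_register_def)

lemma vec_inner_edge_register_unit_vec:
  assumes "p ! Suc s < N"
  shows "vec_inner (edge_register N H \<sigma> p s) (unit_vec (2 * N) (p ! Suc s)) = cnj (\<sigma> (p ! s) (p ! Suc s))"
  using assms by (simp add: vec_inner_unit_vec_right edge_register_def)

lemma prod_inner_path_registers:
  assumes p: "length p = Suc r" and q: "length q = Suc r"
  shows "prod_list (map2 vec_inner (path_registers N H \<sigma> r j p) (rev (path_registers N H \<sigma> r k q)))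
    = (\<Prod>i<Suc r. vec_inner (unit_vec (2 * N) (p ! i))
          (if i < r then edge_register N H \<sigma> q (r - Suc i) else unit_vec (2 * N) k))
      * (\<Prod>i<Suc r. vec_inner (if i = 0 then unit_vec (2 * N) j else edge_register N H \<sigma> p (i - 1))
          (unit_vec (2 * N) (q ! (r - i))))"
proof -
  let ?e = "unit_vec (2 * N)"
  let ?xs = "map ?e p" and ?ys = "rev (map (edge_register N H \<sigma> q) [0..<r]) @ [?e k]"
  let ?xs' = "?e j # map (edge_register N H \<sigma> p) [0..<r]" and ?ys' = "rev (map ?e q)"
  have regs: "path_registers N H \<sigma> r j p = ?xs @ ?xs'" "rev (path_registers N H \<sigma> r k q) = ?ys @ ?ys'"
    unfolding path_registers_def by simp_all
  have len: "length ?xs = length ?ys" using p by simp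
  have "prod_list (map2 vec_inner (path_registers N H \<sigma> r j p) (rev (path_registers N H \<sigma> r k q)))
      = prod_list (map2 vec_inner ?xs ?ys) * prod_list (map2 vec_inner ?xs' ?ys')"
    unfolding regs zip_append[OF len] map_append prod_list.append ..
  moreover have "prod_list (map2 vec_inner ?xs ?ys) = (\<Prod>i<Suc r. vec_inner (?e (p ! i))
      (if i < r then edge_register N H \<sigma> q (r - Suc i) else ?e k))"
    using p by (subst prod_list_map2_conv_prod) (auto simp: nth_append rev_nth intro!: prod.cong)
  moreover have "prod_list (map2 vec_inner ?xs' ?ys') = (\<Prod>i<Suc r. vec_inner
      (if i = 0 then ?e j else edge_register N H \<sigma> p (i - 1)) (?e (q ! (r - i))))"
    using p q by (subst prod_list_map2_conv_prod) (auto simp: nth_Cons' rev_nth intro!: prod.cong)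
  ultimately show ?thesis by simp
qed

locale sparse_hermitian =
  fixes N :: nat and H :: "complex mat" and Nb :: "nat \<Rightarrow> nat set" and \<sigma> :: "nat \<Rightarrow> nat \<Rightarrow> complex"
  assumes N_pos: "N > 0"
    and H_dim: "H \<in> carrier_mat N N"
    and H_herm: "hermitian_mat H"
    and Nb_supp: "\<forall>j<N. {k. k < N \<and> H $$ (j, k) \<noteq> 0} \<subseteq> Nb j"
    and Nb_sym: "\<forall>j<N. \<forall>k<N. k \<in> Nb j \<longleftrightarrow> j \<in> Nb k"
    and \<sigma>_prod: "\<forall>j<N. \<forall>k<N. \<sigma> j k * cnj (\<sigma> k j) = cnj (H $$ (j, k))"
begin

lemma cnj_H: "j < N \<Longrightarrow> k < N \<Longrightarrow> cnj (H $$ (k, j)) = H $$ (j, k)"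
  using H_herm H_dim index_mat_adjoint[of j H k] unfolding hermitian_mat_def by simp

lemma pathD:
  assumes "p \<in> paths N Nb r j"
  shows "length p = Suc r" "p ! 0 = j" "\<And>i. i < Suc r \<Longrightarrow> p ! i < N"
    "\<And>s. s < r \<Longrightarrow> p ! Suc s \<in> Nb (p ! s)"
  using assms unfolding paths_def by auto

lemma rev_path_iff:
  assumes p: "p \<in> paths N Nb r j" and k: "k < N"
  shows "rev p \<in> paths N Nb r k \<longleftrightarrow> p ! r = k"
proof -
  note P = pathD[OF p]
  have rev_nth_p: "rev p ! i = p ! (r - i)" if "i < Suc r" for i
    using that P(1) by (simp add: rev_nth)
  have "rev p ! Suc s \<in> Nb (rev p ! s)" if s: "s < r" for s
  proof -
    have "p ! (r - s) \<in> Nb (p ! (r - Suc s))"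
      using P(4)[of "r - Suc s"] s by (simp add: Suc_diff_Suc)
    then show ?thesis using Nb_sym P(3) s by (simp add: rev_nth_p)
  qed
  moreover have "\<forall>i\<in>set (rev p). i < N" using P(1) P(3) by (auto simp: in_set_conv_nth)
  ultimately show ?thesis unfolding paths_def using P(1) rev_nth_p[of 0] by auto
qed

lemma prod_inner_path_registers_eq_0:
  assumes p: "p \<in> paths N Nb r j" and q: "q \<in> paths N Nb r k" and ne: "p \<noteq> rev q"
  shows "prod_list (map2 vec_inner (path_registers N H \<sigma> r j p) (rev (path_registers N H \<sigma> r k q))) = 0"
proof -
  note P = pathD[OF p] and Q = pathD[OF q]
  obtain i where i: "i < Suc r" "p ! i \<noteq> q ! (r - i)"
  proof (rule ccontr)
    assume "\<not> thesis"
    then have "p = rev q" using that P(1) Q(1) by (intro nth_equalityI) (auto simp: rev_nth)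
    with ne show False ..
  qed
  have zero: "vec_inner (unit_vec (2 * N) (p ! i))
      (if i < r then edge_register N H \<sigma> q (r - Suc i) else unit_vec (2 * N) k) = 0"
  proof (cases "i < r")
    case True
    then show ?thesis
      using i P(3) Q(3)[of "r - i"] vec_inner_unit_vec_edge_register[where a = "p ! i" and p = q and s = "r - Suc i"]
      by (simp add: Suc_diff_Suc)
  next
    case False
    then show ?thesis
      using i P(3)[OF i(1)] Q(2) Q(3)[of 0] by (simp add: vec_inner_unit_vec_unit_vec)
  qed
  have "(\<Prod>i<Suc r. vec_inner (unit_vec (2 * N) (p ! i))
      (if i < r then edge_register N H \<sigma> q (r - Suc i) else unit_vec (2 * N) k)) = 0"
    using zero i(1) by (intro prod_zero bexI[of _ i]) auto
  then show ?thesis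
    using P(1) Q(1) by (simp only: prod_inner_path_registers mult_zero_left)
qed

lemma prod_inner_path_registers_rev:
  assumes p: "p \<in> paths N Nb r j"
  shows "prod_list (map2 vec_inner (path_registers N H \<sigma> r j p) (rev (path_registers N H \<sigma> r (p ! r) (rev p))))
    = (\<Prod>i<r. H $$ (p ! i, p ! Suc i))"
proof -
  note P = pathD[OF p]
  let ?e = "unit_vec (2 * N)"
  have rev_nth_p: "rev p ! i = p ! (r - i)" if "i < Suc r" for i
    using that P(1) by (simp add: rev_nth)
  have "(\<Prod>i<Suc r. vec_inner (?e (p ! i))
          (if i < r then edge_register N H \<sigma> (rev p) (r - Suc i) else ?e (p ! r)))
      = (\<Prod>i<r. \<sigma> (p ! Suc i) (p ! i))"
  proof -
    have "vec_inner (?e (p ! i)) (edge_register N H \<sigma> (rev p) (r - Suc i)) = \<sigma> (p ! Suc i) (p ! i)"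
      if "i < r" for i
      using that P(3)[of i] vec_inner_unit_vec_edge_register[where a = "p ! i" and p = "rev p" and s = "r - Suc i"]
      by (simp add: rev_nth_p Suc_diff_Suc)
    then show ?thesis using P(3)[of r] by (simp add: vec_inner_unit_vec_unit_vec)
  qed
  moreover have "(\<Prod>i<Suc r. vec_inner (if i = 0 then ?e j else edge_register N H \<sigma> p (i - 1))
          (?e (rev p ! (r - i))))
      = (\<Prod>i<r. cnj (\<sigma> (p ! i) (p ! Suc i)))"
  proof -
    have "vec_inner (edge_register N H \<sigma> p i) (?e (rev p ! (r - Suc i))) = cnj (\<sigma> (p ! i) (p ! Suc i))"
      if "i < r" for i
      using that P(3)[of "Suc i"] by (simp add: rev_nth_p vec_inner_edge_register_unit_vec)
    then show ?thesis
      using P(2) P(3)[of 0]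
      by (subst prod.lessThan_Suc_shift) (simp add: rev_nth_p vec_inner_unit_vec_unit_vec)
  qed
  moreover have "\<sigma> (p ! Suc i) (p ! i) * cnj (\<sigma> (p ! i) (p ! Suc i)) = H $$ (p ! i, p ! Suc i)"
    if "i < r" for i
    using that \<sigma>_prod P(3)[of i] P(3)[of "Suc i"] cnj_H by simp
  ultimately show ?thesis
    using P(1) by (simp add: prod_inner_path_registers prod.distrib[symmetric])
qed

lemma sum_prod_inner_path_registers:
  assumes j: "j < N" and k: "k < N"
  shows "(\<Sum>p\<in>paths N Nb r j. \<Sum>q\<in>paths N Nb r k.
            prod_list (map2 vec_inner (path_registers N H \<sigma> r j p) (rev (path_registers N H \<sigma> r k q))))
       = (H ^\<^sub>m r) $$ (j, k)"
proof -
  let ?F = "\<lambda>p q. prod_list (map2 vec_inner (path_registers N H \<sigma> r j p) (rev (path_registers N H \<sigma> r k q)))"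
  let ?w = "\<lambda>p. \<Prod>t<r. H $$ (p ! t, p ! Suc t)"
  have inner: "(\<Sum>q\<in>paths N Nb r k. ?F p q) = (if p ! r = k then ?w p else 0)"
    if p: "p \<in> paths N Nb r j" for p
  proof -
    have "(\<Sum>q\<in>paths N Nb r k. ?F p q) = (\<Sum>q\<in>paths N Nb r k. if q = rev p then ?F p q else 0)"
      using prod_inner_path_registers_eq_0[OF p] by (intro sum.cong refl) (metis rev_rev_ident)
    also have "\<dots> = (if rev p \<in> paths N Nb r k then ?F p (rev p) else 0)"
      using finite_paths by (simp add: sum.delta')
    also have "\<dots> = (if p ! r = k then ?w p else 0)"
      using rev_path_iff[OF p k] prod_inner_path_registers_rev[OF p] by auto
    finally show ?thesis .
  qed
  have "(\<Sum>p\<in>paths N Nb r j. \<Sum>q\<in>paths N Nb r k. ?F p q)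
      = (\<Sum>p\<in>paths N Nb r j. if p ! r = k then ?w p else 0)"
    using inner by (intro sum.cong) auto
  also have "\<dots> = (\<Sum>p\<in>{p \<in> paths N Nb r j. p ! r = k}. ?w p)"
    using finite_paths by (simp add: sum.inter_filter)
  also have "\<dots> = (H ^\<^sub>m r) $$ (j, k)"
    using mat_pow_eq_sum_paths[OF H_dim Nb_supp j k] by simp
  finally show ?thesis .
qed

lemma Swap_mult_Psi:
  "Swap N r *\<^sub>v Psi N H Nb d \<sigma> r k = vec ((2 * N) ^ (2 * r + 2)) (\<lambda>i. complex_of_real (1 / sqrt (real d ^ r))
     * (\<Sum>q\<in>paths N Nb r k. tensor_list (2 * N) (rev (path_registers N H \<sigma> r k q)) $ i))"
proof -
  have b: "2 * N > 0" using N_pos by simp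
  have regs: "tensor_list (2 * N) (rev (path_registers N H \<sigma> r k q)) $ i
      = tensor_list (2 * N) (path_registers N H \<sigma> r k q) $ rev_index (2 * N) (2 * r + 2) i"
    if q: "q \<in> paths N Nb r k" and i: "i < (2 * N) ^ (2 * r + 2)" for q i
  proof -
    have len: "length (path_registers N H \<sigma> r k q) = 2 * r + 2" using pathD(1)[OF q] by simp
    then have "tensor_list (2 * N) (path_registers N H \<sigma> r k q) \<in> carrier_vec ((2 * N) ^ (2 * r + 2))"
      by (intro carrier_vecI) simp
    then show ?thesis
      using i reverse_mat_tensor_list[OF b len, symmetric] by (simp add: reverse_mat_mult_vec[OF b])
  qed
  have "Psi N H Nb d \<sigma> r k \<in> carrier_vec ((2 * N) ^ (2 * r + 2))"
    unfolding Psi_eq_sum_paths by (intro carrier_vecI) simp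
  then have "Swap N r *\<^sub>v Psi N H Nb d \<sigma> r k
      = vec ((2 * N) ^ (2 * r + 2)) (\<lambda>i. Psi N H Nb d \<sigma> r k $ rev_index (2 * N) (2 * r + 2) i)"
    unfolding Swap_eq_reverse_mat by (rule reverse_mat_mult_vec[OF b])
  also have "\<dots> = vec ((2 * N) ^ (2 * r + 2)) (\<lambda>i. complex_of_real (1 / sqrt (real d ^ r))
     * (\<Sum>q\<in>paths N Nb r k. tensor_list (2 * N) (rev (path_registers N H \<sigma> r k q)) $ i))"
  proof (rule eq_vecI)
    fix i assume "i < dim_vec (vec ((2 * N) ^ (2 * r + 2)) (\<lambda>i. complex_of_real (1 / sqrt (real d ^ r))
     * (\<Sum>q\<in>paths N Nb r k. tensor_list (2 * N) (rev (path_registers N H \<sigma> r k q)) $ i)))"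
    then have i: "i < (2 * N) ^ (2 * r + 2)" by (simp only: dim_vec)
    note rev_index_less[OF b, of "2 * r + 2" i]
    with i show "vec ((2 * N) ^ (2 * r + 2)) (\<lambda>i. Psi N H Nb d \<sigma> r k $ rev_index (2 * N) (2 * r + 2) i) $ i
      = vec ((2 * N) ^ (2 * r + 2)) (\<lambda>i. complex_of_real (1 / sqrt (real d ^ r))
     * (\<Sum>q\<in>paths N Nb r k. tensor_list (2 * N) (rev (path_registers N H \<sigma> r k q)) $ i)) $ i"
      unfolding Psi_eq_sum_paths index_vec[OF i] by (simp only: index_vec regs[OF _ i] cong: sum.cong)
  qed simp
  finally show ?thesis .
qed

lemma vec_inner_Psi_Swap_Psi:
  assumes j: "j < N" and k: "k < N"
  shows "vec_inner (Psi N H Nb d \<sigma> r j) (Swap N r *\<^sub>v Psi N H Nb d \<sigma> r k)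
     = complex_of_real (1 / real d ^ r) * (H ^\<^sub>m r) $$ (j, k)"
proof -
  define c where "c = complex_of_real (1 / sqrt (real d ^ r))"
  have "vec_inner (Psi N H Nb d \<sigma> r j) (Swap N r *\<^sub>v Psi N H Nb d \<sigma> r k)
      = cnj c * c * (\<Sum>p\<in>paths N Nb r j. \<Sum>q\<in>paths N Nb r k.
          vec_inner (tensor_list (2 * N) (path_registers N H \<sigma> r j p))
                    (tensor_list (2 * N) (rev (path_registers N H \<sigma> r k q))))"
    unfolding Swap_mult_Psi unfolding Psi_eq_sum_paths c_def
    by (rule vec_inner_vec_sums) (auto dest: pathD(1))
  also have "\<dots> = cnj c * c * (H ^\<^sub>m r) $$ (j, k)"
    using N_pos dim_path_registers
    by (simp add: vec_inner_tensor_list pathD(1) sum_prod_inner_path_registers[OF j k] cong: sum.cong)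
  also have "cnj c * c = complex_of_real (1 / real d ^ r)"
    unfolding c_def by (simp flip: of_real_mult)
  finally show ?thesis .
qed

end

lemma Pi_iso_carrier: "Pi_iso N r \<in> carrier_mat ((2 * N) ^ (2 * r + 2)) N"
  unfolding Pi_iso_def by (simp add: mat_of_cols_def)

lemma padded_carrier: "padded N r k \<in> carrier_vec ((2 * N) ^ (2 * r + 2))"
  unfolding padded_def by (intro carrier_vecI) simp

lemma col_Pi_iso: "k < N \<Longrightarrow> col (Pi_iso N r) k = padded N r k"
  unfolding Pi_iso_def using padded_carrier[of N r k] by (subst col_mat_of_cols) auto

lemma Pi_iso_isometry:
  assumes N: "N > 0"
  shows "mat_adjoint (Pi_iso N r) * Pi_iso N r = 1\<^sub>m N"
proof (rule eq_matI)
  fix j k assume "j < dim_row (1\<^sub>m N)" and "k < dim_col (1\<^sub>m N)"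
  then have j: "j < N" and k: "k < N" by auto
  let ?e = "unit_vec (2 * N)"
  have "(mat_adjoint (Pi_iso N r) * Pi_iso N r) $$ (j, k) = vec_inner (padded N r j) (padded N r k)"
    using index_mult_mat_adjoint[OF Pi_iso_carrier Pi_iso_carrier j k] by (simp add: col_Pi_iso j k)
  also have "\<dots> = vec_inner (?e j) (?e k) * (vec_inner (?e 0) (?e 0)) ^ (2 * r + 1)"
    unfolding padded_def using N by (subst vec_inner_tensor_list) (auto simp: zip_replicate)
  also have "\<dots> = 1\<^sub>m N $$ (j, k)"
    using j k N by (simp add: vec_inner_unit_vec_unit_vec)
  finally show "(mat_adjoint (Pi_iso N r) * Pi_iso N r) $$ (j, k) = 1\<^sub>m N $$ (j, k)" .
qed (use Pi_iso_carrier in auto)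

lemma (in sparse_hermitian) Pi_iso_sandwich_Swap:
  assumes T: "T \<in> carrier_mat ((2 * N) ^ (2 * r + 2)) ((2 * N) ^ (2 * r + 2))"
    and prep: "\<forall>j<N. T *\<^sub>v padded N r j = Psi N H Nb d \<sigma> r j"
  shows "mat_adjoint (Pi_iso N r) * mat_adjoint T * Swap N r * T * Pi_iso N r = (1 / of_nat d \<cdot>\<^sub>m H) ^\<^sub>m r"
proof -
  let ?P = "Pi_iso N r" and ?S = "Swap N r" and ?M = "(2 * N) ^ (2 * r + 2)"
  have P: "?P \<in> carrier_mat ?M N" by (rule Pi_iso_carrier)
  have S: "?S \<in> carrier_mat ?M ?M" unfolding Swap_eq_reverse_mat by (rule reverse_mat_carrier)
  have TP: "T * ?P \<in> carrier_mat ?M N" using T P by simp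
  have col_TP: "col (T * ?P) j = Psi N H Nb d \<sigma> r j" if "j < N" for j
    using col_mult2[OF T P that] col_Pi_iso[OF that] prep that by simp
  have "mat_adjoint ?P * mat_adjoint T * ?S * T * ?P = mat_adjoint (T * ?P) * (?S * (T * ?P))"
  proof -
    have X: "mat_adjoint (T * ?P) \<in> carrier_mat N ?M" using TP by simp
    have "mat_adjoint ?P * mat_adjoint T * ?S * T * ?P = mat_adjoint (T * ?P) * ?S * T * ?P"
      by (simp add: mat_adjoint_mult[OF T P])
    also have "\<dots> = mat_adjoint (T * ?P) * ?S * (T * ?P)"
      using X S T P by (intro assoc_mult_mat) auto
    also have "\<dots> = mat_adjoint (T * ?P) * (?S * (T * ?P))"
      using X S TP by (rule assoc_mult_mat)
    finally show ?thesis .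
  qed
  also have "\<dots> = (1 / of_nat d \<cdot>\<^sub>m H) ^\<^sub>m r"
  proof (rule eq_matI)
    fix j k assume "j < dim_row ((1 / of_nat d \<cdot>\<^sub>m H) ^\<^sub>m r)" "k < dim_col ((1 / of_nat d \<cdot>\<^sub>m H) ^\<^sub>m r)"
    then have j: "j < N" and k: "k < N" using H_dim by (auto split: if_splits)
    have "(mat_adjoint (T * ?P) * (?S * (T * ?P))) $$ (j, k) = vec_inner (col (T * ?P) j) (col (?S * (T * ?P)) k)"
      using S TP by (intro index_mult_mat_adjoint[OF TP _ j k]) simp
    also have "\<dots> = vec_inner (Psi N H Nb d \<sigma> r j) (?S *\<^sub>v Psi N H Nb d \<sigma> r k)"
      by (simp only: col_mult2[OF S TP k] col_TP[OF j] col_TP[OF k])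
    also have "\<dots> = ((1 / of_nat d \<cdot>\<^sub>m H) ^\<^sub>m r) $$ (j, k)"
      using j k H_dim by (simp add: vec_inner_Psi_Swap_Psi pow_mat_smult[OF H_dim] power_divide)
    finally show "(mat_adjoint (T * ?P) * (?S * (T * ?P))) $$ (j, k) = ((1 / of_nat d \<cdot>\<^sub>m H) ^\<^sub>m r) $$ (j, k)" .
  qed (use TP S H_dim in auto)
  finally show ?thesis .
qed

theorem mainTheorem4:
  fixes n N d r :: nat
    and H :: "complex mat"
    and Nb :: "nat \<Rightarrow> nat set"
    and \<sigma> :: "nat \<Rightarrow> nat \<Rightarrow> complex"
    and T Tt :: "complex mat"
    and \<epsilon> :: real
  assumes N_def: "N = 2 ^ n"
    and H_dim: "H \<in> carrier_mat N N"
    and H_herm: "hermitian_mat H"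
    and H_max: "\<forall>j<N. \<forall>k<N. cmod (H $$ (j, k)) \<le> 1"
    and Nb_sub: "\<forall>j<N. Nb j \<subseteq> {..<N}"
    and Nb_card: "\<forall>j<N. card (Nb j) = d"
    and Nb_supp: "\<forall>j<N. {k. k < N \<and> H $$ (j, k) \<noteq> 0} \<subseteq> Nb j"
    and Nb_sym: "\<forall>j<N. \<forall>k<N. k \<in> Nb j \<longleftrightarrow> j \<in> Nb k"
    and \<sigma>_abs: "\<forall>j<N. \<forall>k<N. (cmod (\<sigma> j k))\<^sup>2 = cmod (H $$ (j, k))"
    and \<sigma>_prod: "\<forall>j<N. \<forall>k<N. \<sigma> j k * cnj (\<sigma> k j) = cnj (H $$ (j, k))"
    and r_pos: "r \<ge> 1"
    and T_dim: "T \<in> carrier_mat ((2 * N) ^ (2 * r + 2)) ((2 * N) ^ (2 * r + 2))"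
    and T_unitary: "unitary_mat T"
    and T_prep: "\<forall>j<N. T *\<^sub>v padded N r j = Psi N H Nb d \<sigma> r j"
    and eps_nonneg: "\<epsilon> \<ge> 0"
    and Tt_dim: "Tt \<in> carrier_mat ((2 * N) ^ (2 * r + 2)) ((2 * N) ^ (2 * r + 2))"
    and Tt_unitary: "unitary_mat Tt"
    and Tt_close: "spec_norm (Tt - T) \<le> \<epsilon> / 2"
  shows "spec_norm (mat_adjoint (Pi_iso N r) * mat_adjoint Tt * Swap N r * Tt * Pi_iso N r
                    - (1 / of_nat d \<cdot>\<^sub>m H) ^\<^sub>m r) \<le> \<epsilon>"
proof -
  \<comment> \<open>The bounds on H and \<sigma>, the degree d and r \<ge> 1 only serve to make each \<Psi>_j a unit
    vector, i.e. to make a unitary T as assumed exist.\<close>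
  have N: "N > 0" using N_def by simp
  interpret sparse_hermitian N H Nb \<sigma>
    using N H_dim H_herm Nb_supp Nb_sym \<sigma>_prod by unfold_locales
  have S: "Swap N r \<in> carrier_mat ((2 * N) ^ (2 * r + 2)) ((2 * N) ^ (2 * r + 2))"
    unfolding Swap_eq_reverse_mat by (rule reverse_mat_carrier)
  have "spec_norm (Pi_iso N r) \<le> 1"
    using Pi_iso_carrier Pi_iso_isometry[OF N] by (rule spec_norm_isometry_le)
  moreover have "spec_norm (Swap N r) \<le> 1"
    unfolding Swap_eq_reverse_mat using N by (intro spec_norm_reverse_mat_le) simp
  moreover have "spec_norm T \<le> 1" and "spec_norm Tt \<le> 1"
    using T_dim T_unitary Tt_dim Tt_unitary by (auto intro: spec_norm_unitary_le)
  ultimately have "spec_norm (mat_adjoint (Pi_iso N r) * mat_adjoint Tt * Swap N r * Tt * Pi_iso N r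
      - mat_adjoint (Pi_iso N r) * mat_adjoint T * Swap N r * T * Pi_iso N r) \<le> 2 * spec_norm (Tt - T)"
    by (intro spec_norm_sandwich_diff_le[OF Pi_iso_carrier S T_dim Tt_dim])
  then show ?thesis
    using Pi_iso_sandwich_Swap[OF T_dim T_prep] Tt_close by simp
qed

end
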